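(* Let $G^1$ be a 1-wconnected 1-graph and let $S^0$ be any 0-section of $G^1$. Then every 0-hypernode of the enlargement ${}^{*}S^0$ lies in the principal 1-galaxy $\Gamma_0^1$ of ${}^{*}G^1$.
   Context: 1-graphs. A 1-graph $G^1=\{X^0,B,X^1\}$ consists of a graph $G^0=\{X^0,B\}$ (0-nodes $X^0$; branches are two-element sets of 0-nodes) together with a set $X^1$ of 1-nodes. To form $X^1$, the 0-tips of $G^0$ (equivalence classes of eventually identical one-ended paths) are partitioned into subsets, some of which are augmented by a single 0-node (each 0-node used at most once). 0-sections. A 0-section is the subgraph of $G^0$ induced by a maximal set of branches pairwise connected by paths in $G^0$. Its enlargement ${}^{*}S^0$ has as 0-hypernodes the classes $[x_n]$ of sequences of 0-nodes of $S^0$. Wdistance. The wdistance $d(x,y)$ is the minimum ordinal length of a two-ended 0-walk or 1-walk terminating at $x$ and $y$. A finite 0-walk has length equal to its number of branch traversals; each 0-tip traversal contributes $\omega$; 1-walk lengths are natural sums, so $d<\omega^2$. 1-wconnected means every two nodes are joined by such a walk. Enlargement and principal 1-galaxy. Fix a free ultrafilter $\mathcal F$ on $\mathbb N$. Hypernodes of ${}^{*}G^1$ are classes $[x_n]$ of sequences of 0-nodes or of 1-nodes, modulo agreement on a set in $\mathcal F$. A standard hypernode is the class of a constant sequence. Hypernodes $[x_n],[y_n]$ are 1-limitedly distant if $\{n:d(x_n,y_n)\le\omega\cdot k\}\in\mathcal F$ for some $k\in\mathbb N$. The principal 1-galaxy $\Gamma_0^1$ is the set of hypernodes 1-limitedly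 distant from a standard hypernode, together with the hyperbranches joining them. *)

theory Defs
  imports Main "HOL-Library.Product_Lexorder"
begin

text \<open>Ordinal lengths below omega^2: the pair (k, n) :: nat \<times> nat stands for the
ordinal omega*k + n.  The lexicographic order of HOL-Library.Product_Lexorder is exactly
the ordinal order, and componentwise addition is the natural (Hessenberg) sum.\<close>

type_synonym wlen = "nat \<times> nat"

definition omega_times :: "nat \<Rightarrow> wlen" where
  "omega_times k = (k, 0)"

definition is_graph0 :: "'v set \<Rightarrow> 'v set set \<Rightarrow> bool" where
  "is_graph0 X0 B \<longleftrightarrow> (\<forall>b\<in>B. b \<subseteq> X0 \<and> (\<exists>u v. u \<noteq> v \<and> b = {u, v}))"

definition one_ended_path :: "'v set \<Rightarrow> 'v set set \<Rightarrow> (nat \<Rightarrow> 'v) \<Rightarrow> bool" where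
  "one_ended_path X0 B p \<longleftrightarrow> inj p \<and> (\<forall>i. p i \<in> X0 \<and> {p i, p (Suc i)} \<in> B)"

definition eventually_identical :: "(nat \<Rightarrow> 'v) \<Rightarrow> (nat \<Rightarrow> 'v) \<Rightarrow> bool" where
  "eventually_identical p q \<longleftrightarrow> (\<exists>a b. \<forall>i. p (a + i) = q (b + i))"

definition tips0 :: "'v set \<Rightarrow> 'v set set \<Rightarrow> (nat \<Rightarrow> 'v) set set" where
  "tips0 X0 B = {{q. one_ended_path X0 B q \<and> eventually_identical p q} | p. one_ended_path X0 B p}"

text \<open>A 1-node is a (nonempty) set of 0-tips together with an optional 0-node.\<close>

type_synonym 'v onenode = "(nat \<Rightarrow> 'v) set set \<times> 'v option"

definition is_1graph :: "'v set \<Rightarrow> 'v set set \<Rightarrow> 'v onenode set \<Rightarrow> bool" where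
  "is_1graph X0 B X1 \<longleftrightarrow>
     is_graph0 X0 B \<and>
     (\<forall>x\<in>X1. fst x \<noteq> {} \<and> fst x \<subseteq> tips0 X0 B \<and> (\<forall>u. snd x = Some u \<longrightarrow> u \<in> X0)) \<and>
     (\<forall>x\<in>X1. \<forall>y\<in>X1. x \<noteq> y \<longrightarrow> fst x \<inter> fst y = {} \<and> (snd x = None \<or> snd x \<noteq> snd y)) \<and>
     (\<Union>x\<in>X1. fst x) = tips0 X0 B"

datatype 'v node = Node0 'v | Node1 "'v onenode"

definition nodes :: "'v set \<Rightarrow> 'v onenode set \<Rightarrow> 'v node set" where
  "nodes X0 X1 = Node0 ` X0 \<union> Node1 ` X1"

text \<open>A 0-walk reaches node z at a 0-node u (u = z, or u is embraced by the 1-node z),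
or through a 0-tip t (t is a member of the 1-node z).\<close>

definition reaches_at :: "'v node \<Rightarrow> 'v \<Rightarrow> bool" where
  "reaches_at z u \<longleftrightarrow> z = Node0 u \<or> (\<exists>T. z = Node1 (T, Some u))"

definition reaches_tip :: "'v node \<Rightarrow> (nat \<Rightarrow> 'v) set \<Rightarrow> bool" where
  "reaches_tip z t \<longleftrightarrow> (\<exists>T a. z = Node1 (T, a) \<and> t \<in> T)"

definition fwalk :: "'v set set \<Rightarrow> 'v list \<Rightarrow> bool" where
  "fwalk B ws \<longleftrightarrow> ws \<noteq> [] \<and> (\<forall>i. Suc i < length ws \<longrightarrow> {ws ! i, ws ! Suc i} \<in> B)"

definition ray_walk :: "'v set set \<Rightarrow> (nat \<Rightarrow> 'v) set \<Rightarrow> (nat \<Rightarrow> 'v) \<Rightarrow> bool" where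
  "ray_walk B t w \<longleftrightarrow> (\<forall>i. {w i, w (Suc i)} \<in> B) \<and> (\<exists>a. (\<lambda>i. w (a + i)) \<in> t)"

text \<open>A nontrivial 0-walk joining nodes z and z', together with its length:
finite (number of branches), one-ended (omega), endless (omega*2).\<close>

definition segment :: "'v set \<Rightarrow> 'v set set \<Rightarrow> 'v node \<Rightarrow> 'v node \<Rightarrow> wlen \<Rightarrow> bool" where
  "segment X0 B z z' l \<longleftrightarrow>
     (\<exists>ws. fwalk B ws \<and> 2 \<le> length ws \<and> reaches_at z (hd ws) \<and> reaches_at z' (last ws)
          \<and> l = (0, length ws - 1))
   \<or> (\<exists>w t. t \<in> tips0 X0 B \<and> ray_walk B t w \<and>
          ((reaches_at z (w 0) \<and> reaches_tip z' t) \<or> (reaches_tip z t \<and> reaches_at z' (w 0)))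
          \<and> l = (1, 0))
   \<or> (\<exists>w1 w2 t1 t2. t1 \<in> tips0 X0 B \<and> t2 \<in> tips0 X0 B \<and> ray_walk B t1 w1 \<and> ray_walk B t2 w2
          \<and> w1 0 = w2 0 \<and> reaches_tip z t1 \<and> reaches_tip z' t2 \<and> l = (2, 0))"

text \<open>Two-ended 0-walk or 1-walk from x to y of length l: a finite alternating sequence
of nodes and nontrivial 0-walks; its length is the natural sum of the 0-walk lengths.
The empty sequence of 0-walks is the trivial walk (x = y, length 0).\<close>

definition walk :: "'v set \<Rightarrow> 'v set set \<Rightarrow> 'v onenode set \<Rightarrow> 'v node \<Rightarrow> 'v node \<Rightarrow> wlen \<Rightarrow> bool" where
  "walk X0 B X1 x y l \<longleftrightarrow>
     (\<exists>zs ls. length zs = Suc (length ls) \<and> hd zs = x \<and> last zs = y \<and> set zs \<subseteq> nodes X0 X1 \<and>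
        (\<forall>i < length ls. segment X0 B (zs ! i) (zs ! Suc i) (ls ! i)) \<and>
        l = (sum_list (map fst ls), sum_list (map snd ls)))"

definition wdist :: "'v set \<Rightarrow> 'v set set \<Rightarrow> 'v onenode set \<Rightarrow> 'v node \<Rightarrow> 'v node \<Rightarrow> wlen" where
  "wdist X0 B X1 x y = (LEAST l. walk X0 B X1 x y l)"

definition wconnected1 :: "'v set \<Rightarrow> 'v set set \<Rightarrow> 'v onenode set \<Rightarrow> bool" where
  "wconnected1 X0 B X1 \<longleftrightarrow>
     (\<forall>x\<in>nodes X0 X1. \<forall>y\<in>nodes X0 X1. \<exists>l. walk X0 B X1 x y l)"

definition branches_connected :: "'v set set \<Rightarrow> 'v set \<Rightarrow> 'v set \<Rightarrow> bool" where
  "branches_connected B b1 b2 \<longleftrightarrow>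
     (\<exists>ps. fwalk B ps \<and> distinct ps \<and>
        (\<exists>i j. Suc i < length ps \<and> Suc j < length ps \<and>
               b1 = {ps ! i, ps ! Suc i} \<and> b2 = {ps ! j, ps ! Suc j}))"

definition is_0section :: "'v set set \<Rightarrow> 'v set set \<Rightarrow> bool" where
  "is_0section B S \<longleftrightarrow>
     S \<noteq> {} \<and> S \<subseteq> B \<and> (\<forall>b1\<in>S. \<forall>b2\<in>S. branches_connected B b1 b2) \<and>
     (\<forall>S'. S \<subseteq> S' \<and> S' \<subseteq> B \<and> (\<forall>b1\<in>S'. \<forall>b2\<in>S'. branches_connected B b1 b2) \<longrightarrow> S' = S)"

definition section_nodes :: "'v set set \<Rightarrow> 'v set" where
  "section_nodes S = \<Union>S"

definition free_ultrafilter :: "nat set set \<Rightarrow> bool" where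
  "free_ultrafilter F \<longleftrightarrow>
     UNIV \<in> F \<and> {} \<notin> F \<and> (\<forall>A C. A \<in> F \<longrightarrow> A \<subseteq> C \<longrightarrow> C \<in> F) \<and>
     (\<forall>A\<in>F. \<forall>C\<in>F. A \<inter> C \<in> F) \<and> (\<forall>A. A \<in> F \<or> - A \<in> F) \<and> (\<forall>A. finite A \<longrightarrow> A \<notin> F)"

text \<open>A hypernode, given by a representative sequence of nodes, lies in the principal
1-galaxy: it is 1-limitedly distant from some standard hypernode (constant sequence).\<close>

definition in_principal_galaxy ::
  "'v set \<Rightarrow> 'v set set \<Rightarrow> 'v onenode set \<Rightarrow> nat set set \<Rightarrow> (nat \<Rightarrow> 'v node) \<Rightarrow> bool" where
  "in_principal_galaxy X0 B X1 F x \<longleftrightarrow>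
     (\<exists>y\<in>nodes X0 X1. \<exists>k::nat. {n. wdist X0 B X1 (x n) y \<le> omega_times k} \<in> F)"

end

theory Submission
  imports Defs
begin

text \<open>Any two 0-nodes of a 0-section lie on one finite path of the section, so a finite
0-walk joins them and their wdistance is a natural number, in particular at most \<open>\<omega>\<close>.
Hence every 0-hypernode of the enlarged section is within \<open>\<omega>\<close> of the standard hypernode
of a fixed 0-node of the section, for all indices and not merely on a set of \<open>F\<close>.\<close>

lemma fwalk_rev:
  assumes "fwalk B ws"
  shows "fwalk B (rev ws)"
  unfolding fwalk_def
proof (intro conjI allI impI)
  show "rev ws \<noteq> []" using assms by (simp add: fwalk_def)
next
  fix i assume i: "Suc i < length (rev ws)"
  let ?j = "length ws - Suc (Suc i)"
  have "{ws ! ?j, ws ! Suc ?j} \<in> B" using assms i by (simp add: fwalk_def)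
  moreover have "rev ws ! i = ws ! Suc ?j" "rev ws ! Suc i = ws ! ?j"
    using i by (simp_all add: rev_nth Suc_diff_Suc)
  ultimately show "{rev ws ! i, rev ws ! Suc i} \<in> B" by (simp add: insert_commute)
qed

lemma fwalk_drop_take:
  assumes "fwalk B ps" and "a \<le> c" and "c < length ps"
  shows "fwalk B (drop a (take (Suc c) ps))"
  unfolding fwalk_def
proof (intro conjI allI impI)
  show "drop a (take (Suc c) ps) \<noteq> []" using assms(2,3) by simp
next
  fix i assume "Suc i < length (drop a (take (Suc c) ps))"
  then have "Suc (a + i) \<le> c" by simp
  then show "{drop a (take (Suc c) ps) ! i, drop a (take (Suc c) ps) ! Suc i} \<in> B"
    using assms(1,3) by (simp add: fwalk_def)
qed

lemma walk_refl:
  assumes "x \<in> nodes X0 X1"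
  shows "walk X0 B X1 x x (0, 0)"
  unfolding walk_def using assms by (rule_tac exI[of _ "[x]"], rule_tac exI[of _ "[]"]) simp

lemma walk_segment:
  assumes "segment X0 B x y l" and "x \<in> nodes X0 X1" and "y \<in> nodes X0 X1"
  shows "walk X0 B X1 x y l"
  unfolding walk_def using assms by (rule_tac exI[of _ "[x, y]"], rule_tac exI[of _ "[l]"]) simp

lemma walk_fwalk:
  assumes "fwalk B ws" and "hd ws \<in> X0" and "last ws \<in> X0"
  shows "walk X0 B X1 (Node0 (hd ws)) (Node0 (last ws)) (0, length ws - 1)"
proof (cases "length ws = 1")
  case True
  then have "last ws = hd ws" by (cases ws) auto
  with True show ?thesis using assms(2) walk_refl[of "Node0 (hd ws)" X0 X1 B] by (simp add: nodes_def)
next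
  case False
  moreover have "length ws \<noteq> 0" using assms(1) by (simp add: fwalk_def)
  ultimately have "2 \<le> length ws" by linarith
  then have "segment X0 B (Node0 (hd ws)) (Node0 (last ws)) (0, length ws - 1)"
    unfolding segment_def reaches_at_def using assms(1) by (auto intro!: disjI1 exI[of _ ws])
  with assms(2,3) show ?thesis by (intro walk_segment) (auto simp: nodes_def)
qed

lemma walk_fwalk_nth:
  assumes "fwalk B ps" and "a \<le> c" and "c < length ps"
    and "ps ! a \<in> X0" and "ps ! c \<in> X0"
  shows "walk X0 B X1 (Node0 (ps ! a)) (Node0 (ps ! c)) (0, c - a)"
proof -
  let ?ws = "drop a (take (Suc c) ps)"
  have "?ws \<noteq> []" using assms(2,3) by simp
  then have "hd ?ws = ps ! a" "last ?ws = ps ! c" "length ?ws - 1 = c - a"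
    using assms(2,3) by (simp_all add: hd_conv_nth last_conv_nth)
  with walk_fwalk[OF fwalk_drop_take[OF assms(1-3)]] assms(4,5) show ?thesis by metis
qed

lemma walk_fwalk_members:
  assumes "fwalk B ps" and "u \<in> set ps" and "v \<in> set ps" and "u \<in> X0" and "v \<in> X0"
  shows "\<exists>m. walk X0 B X1 (Node0 u) (Node0 v) (0, m)"
proof -
  obtain a c where ac: "a < length ps" "ps ! a = u" "c < length ps" "ps ! c = v"
    using assms(2,3) by (metis in_set_conv_nth)
  show ?thesis
  proof (cases "a \<le> c")
    case True
    then show ?thesis using walk_fwalk_nth[OF assms(1) True] ac assms(4,5) by blast
  next
    case False
    let ?a = "length ps - Suc a" and ?c = "length ps - Suc c"
    have "?a \<le> ?c" "?c < length (rev ps)" using False ac by auto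
    moreover have "rev ps ! ?a = u" "rev ps ! ?c = v"
      using ac by (simp_all add: rev_nth Suc_diff_Suc)
    ultimately show ?thesis
      using walk_fwalk_nth[OF fwalk_rev[OF assms(1)], of ?a ?c X0 X1] assms(4,5) by auto
  qed
qed

lemma wdist_le_walk:
  assumes "walk X0 B X1 x y l"
  shows "wdist X0 B X1 x y \<le> l"
  unfolding wdist_def using assms by (rule Least_le)

lemma section_nodes_on_common_fwalk:
  assumes "is_0section B S" and "u \<in> section_nodes S" and "v \<in> section_nodes S"
  obtains ps where "fwalk B ps" and "u \<in> set ps" and "v \<in> set ps"
proof -
  obtain bu bv where "bu \<in> S" "u \<in> bu" "bv \<in> S" "v \<in> bv"
    using assms(2,3) by (auto simp: section_nodes_def)
  moreover have "branches_connected B bu bv"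
    using assms(1) \<open>bu \<in> S\<close> \<open>bv \<in> S\<close> by (simp add: is_0section_def)
  ultimately obtain ps i j where "fwalk B ps" "Suc i < length ps" "Suc j < length ps"
      "u \<in> {ps ! i, ps ! Suc i}" "v \<in> {ps ! j, ps ! Suc j}"
    unfolding branches_connected_def by blast
  then show ?thesis by (intro that) auto
qed

lemma section_nodes_subset:
  assumes "is_graph0 X0 B" and "is_0section B S"
  shows "section_nodes S \<subseteq> X0"
  using assms by (auto simp: is_graph0_def is_0section_def section_nodes_def)

lemma wdist_section_nodes_le_omega:
  assumes "is_graph0 X0 B" and "is_0section B S"
    and "u \<in> section_nodes S" and "v \<in> section_nodes S"
  shows "wdist X0 B X1 (Node0 u) (Node0 v) \<le> omega_times 1"
proof -
  obtain ps where "fwalk B ps" "u \<in> set ps" "v \<in> set ps"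
    using section_nodes_on_common_fwalk[OF assms(2-4)] .
  moreover have "u \<in> X0" "v \<in> X0" using section_nodes_subset[OF assms(1,2)] assms(3,4) by auto
  ultimately obtain m where "walk X0 B X1 (Node0 u) (Node0 v) (0, m)"
    using walk_fwalk_members by metis
  then have "wdist X0 B X1 (Node0 u) (Node0 v) \<le> (0, m)" by (rule wdist_le_walk)
  also have "(0, m) \<le> omega_times 1" by (simp add: omega_times_def)
  finally show ?thesis .
qed

lemma section_nodes_nonempty:
  assumes "is_graph0 X0 B" and "is_0section B S"
  shows "section_nodes S \<noteq> {}"
  using assms by (fastforce simp: is_graph0_def is_0section_def section_nodes_def)

theorem mainTheorem14:
  fixes X0 :: "'v set" and B :: "'v set set" and X1 :: "'v onenode set"
    and F :: "nat set set" and S :: "'v set set" and x :: "nat \<Rightarrow> 'v"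
  assumes "is_1graph X0 B X1"
    and "wconnected1 X0 B X1"
    and "free_ultrafilter F"
    and "is_0section B S"
    and "\<forall>n. x n \<in> section_nodes S"
  shows "in_principal_galaxy X0 B X1 F (\<lambda>n. Node0 (x n))"
proof -
  have graph: "is_graph0 X0 B" using assms(1) by (simp add: is_1graph_def)
  obtain y where y: "y \<in> section_nodes S"
    using section_nodes_nonempty[OF graph assms(4)] by blast
  have "Node0 y \<in> nodes X0 X1"
    using y section_nodes_subset[OF graph assms(4)] by (auto simp: nodes_def)
  moreover have "{n. wdist X0 B X1 (Node0 (x n)) (Node0 y) \<le> omega_times 1} = UNIV"
    using wdist_section_nodes_le_omega[OF graph assms(4) _ y] assms(5) by blast
  moreover have "UNIV \<in> F" using assms(3) by (simp add: free_ultrafilter_def)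
  ultimately show ?thesis unfolding in_principal_galaxy_def by metis
qed

end
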